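(* Let $P$ and $Q$ be persistence diagrams, i.e. finite multisets of points in $\mathbb{R}^2$. Let $\pi:\mathbb{R}^2\to L$ be the projection onto the diagonal $L=\{(x,x)\mid x\in\mathbb{R}\}$, $\pi(p)=\big(\tfrac{p.x+p.y}{2},\tfrac{p.x+p.y}{2}\big)$, and set $\widehat P = P\cup\pi(Q)$ and $\widehat Q = Q\cup \pi(P)$ (as multisets). Let $\mu_{\widehat P}$ and $\nu_{\widehat Q}$ be the discrete measures induced by $\widehat P$ and $\widehat Q$ (each point carrying mass equal to its multiplicity). Then $$d_{OT}(\mu_{\widehat P},\nu_{\widehat Q}) \le 2\, d_W(P,Q).$$
   Context: For two discrete measures $\mu,\nu$ on a finite set $X\subset\mathbb{R}^2$ with equal total mass, $d_{OT}(\mu,\nu)=\min_{\tau}\sum_{x,y\in X}\tau(x,y)\|x-y\|_2$, where $\tau$ ranges over nonnegative measures on $X\times X$ whose two marginals are $\mu$ and $\nu$. For finite multisets $A,B\subset\mathbb{R}^2$, an augmented matching is a subset $\Gamma\subset (A\cup\pi(B))\times(B\cup\pi(A))$ such that each element of $A$ and of $B$ (counted with multiplicity) appears in exactly one pair of $\Gamma$, and every pair $(a,b)\in\Gamma$ has one of the forms: (1) $a\in A,b\in B$; (2) $a\in A$, $b=\pi(a)$; (3) $a=\pi(b)$, $b\in B$. The 1-Wasserstein distance between persistence diagrams is $d_W(P,Q)=\min_\Gamma\sum_{(p,q)\in\Gamma}\|p-q\|_2$, the minimum over all augmented matchings $\Gamma$ for $P$ and $Q$. *)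

theory Defs
  imports "HOL-Analysis.Analysis" "HOL-Library.Multiset"
begin

type_synonym pt = "real \<times> real"

definition eucl :: "pt \<Rightarrow> pt \<Rightarrow> real" where
  "eucl p q = sqrt ((fst p - fst q)^2 + (snd p - snd q)^2)"

definition diag_proj :: "pt \<Rightarrow> pt" where
  "diag_proj p = ((fst p + snd p) / 2, (fst p + snd p) / 2)"

definition transport_plan :: "pt set \<Rightarrow> (pt \<Rightarrow> real) \<Rightarrow> (pt \<Rightarrow> real) \<Rightarrow> (pt \<times> pt \<Rightarrow> real) \<Rightarrow> bool" where
  "transport_plan X mu nu tau \<longleftrightarrow>
     (\<forall>z. tau z \<ge> 0) \<and> (\<forall>z. z \<notin> X \<times> X \<longrightarrow> tau z = 0) \<and>
     (\<forall>x\<in>X. (\<Sum>y\<in>X. tau (x, y)) = mu x) \<and>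
     (\<forall>y\<in>X. (\<Sum>x\<in>X. tau (x, y)) = nu y)"

definition d_OT :: "pt set \<Rightarrow> (pt \<Rightarrow> real) \<Rightarrow> (pt \<Rightarrow> real) \<Rightarrow> real" where
  "d_OT X mu nu = Inf {(\<Sum>z\<in>X \<times> X. tau z * eucl (fst z) (snd z)) | tau. transport_plan X mu nu tau}"

definition mset_measure :: "pt multiset \<Rightarrow> pt \<Rightarrow> real" where
  "mset_measure A x = real (count A x)"

text \<open>An augmented matching between multisets A and B, with multiplicities, is given by
  M (pairs of type (1): a in A matched to b in B), DA (elements a of A matched to pi(a),
  type (2)) and DB (elements b of B matched to pi(b), type (3)), such that every element
  of A and of B (with multiplicity) occurs in exactly one pair.\<close>
definition aug_matching :: "pt multiset \<Rightarrow> pt multiset \<Rightarrow> (pt \<times> pt) multiset \<Rightarrow> pt multiset \<Rightarrow> pt multiset \<Rightarrow> bool" where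
  "aug_matching A B M DA DB \<longleftrightarrow> image_mset fst M + DA = A \<and> image_mset snd M + DB = B"

definition aug_cost :: "(pt \<times> pt) multiset \<Rightarrow> pt multiset \<Rightarrow> pt multiset \<Rightarrow> real" where
  "aug_cost M DA DB =
     (\<Sum>z\<in>#M. eucl (fst z) (snd z)) + (\<Sum>a\<in>#DA. eucl a (diag_proj a)) + (\<Sum>b\<in>#DB. eucl (diag_proj b) b)"

definition d_W :: "pt multiset \<Rightarrow> pt multiset \<Rightarrow> real" where
  "d_W P Q = Inf {aug_cost M DA DB | M DA DB. aug_matching P Q M DA DB}"

end

theory Submission
  imports Defs
begin

text \<open>An augmented matching (M, DA, DB) of P and Q induces a transport plan from P + \<pi>(Q) to
  Q + \<pi>(P): a pair (a, b) of M ships a to b and, in addition, \<pi>(b) to \<pi>(a); an element a of DA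
  ships a to \<pi>(a), and an element b of DB receives \<pi>(b). Since \<pi> is 1-Lipschitz, the extra
  copy of M costs no more than M itself, so the plan costs at most twice the matching.\<close>

lemma sum_count_Pair_eq_count_image_fst:
  assumes "finite Y" "set_mset T \<subseteq> UNIV \<times> Y"
  shows "(\<Sum>y\<in>Y. count T (x, y)) = count (image_mset fst T) x"
proof -
  have "(\<Sum>y\<in>Y. count T (x, y)) = sum (count T) (Pair x ` Y)"
    by (simp add: sum.reindex inj_on_def)
  also have "\<dots> = sum (count T) (fst -` {x} \<inter> set_mset T)"
    using assms by (intro sum.mono_neutral_right) (auto simp: not_in_iff)
  finally show ?thesis by (simp add: count_image_mset)
qed

lemma sum_count_Pair_eq_count_image_snd:
  assumes "finite X" "set_mset T \<subseteq> X \<times> UNIV"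
  shows "(\<Sum>x\<in>X. count T (x, y)) = count (image_mset snd T) y"
proof -
  have "(\<Sum>x\<in>X. count T (x, y)) = sum (count T) ((\<lambda>x. (x, y)) ` X)"
    by (simp add: sum.reindex inj_on_def)
  also have "\<dots> = sum (count T) (snd -` {y} \<inter> set_mset T)"
    using assms by (intro sum.mono_neutral_right) (auto simp: not_in_iff)
  finally show ?thesis by (simp add: count_image_mset)
qed

lemma sum_count_mult_eq_sum_mset:
  fixes f :: "'a \<Rightarrow> 'b::comm_semiring_1"
  assumes "finite S" "set_mset T \<subseteq> S"
  shows "(\<Sum>z\<in>S. of_nat (count T z) * f z) = (\<Sum>z\<in>#T. f z)"
  using assms(2)
proof (induction T)
  case empty
  then show ?case by simp
next
  case (add w T)
  have "of_nat (count (add_mset w T) z) * f z = of_nat (count T z) * f z + (if z = w then f z else 0)"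
    for z by (simp add: algebra_simps)
  then have "(\<Sum>z\<in>S. of_nat (count (add_mset w T) z) * f z)
      = (\<Sum>z\<in>S. of_nat (count T z) * f z) + (\<Sum>z\<in>S. if z = w then f z else 0)"
    by (simp add: sum.distrib)
  with add assms(1) show ?case by (simp add: add.commute)
qed

lemma eucl_nonneg: "eucl p q \<ge> 0"
  unfolding eucl_def by simp

lemma eucl_commute: "eucl p q = eucl q p"
  unfolding eucl_def by (simp add: power2_commute)

lemma eucl_diag_proj_le: "eucl (diag_proj p) (diag_proj q) \<le> eucl p q"
proof -
  define dx dy where "dx = fst p - fst q" and "dy = snd p - snd q"
  have "eucl (diag_proj p) (diag_proj q) = sqrt (((dx + dy) / 2)^2 + ((dx + dy) / 2)^2)"
    unfolding eucl_def diag_proj_def dx_def dy_def by (simp add: diff_divide_distrib algebra_simps)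
  also have "\<dots> \<le> sqrt (dx^2 + dy^2)"
    using sum_power2_ge_zero[of "dx - dy" 0]
    by (intro real_sqrt_le_mono) (simp add: power2_eq_square field_simps)
  also have "\<dots> = eucl p q"
    unfolding eucl_def dx_def dy_def ..
  finally show ?thesis .
qed

lemma transport_plan_count:
  assumes "finite X" "set_mset T \<subseteq> X \<times> X"
  shows "transport_plan X (mset_measure (image_mset fst T)) (mset_measure (image_mset snd T))
           (\<lambda>z. real (count T z))"
proof -
  have "set_mset T \<subseteq> UNIV \<times> X" "set_mset T \<subseteq> X \<times> UNIV"
    using assms(2) by auto
  then have "(\<Sum>y\<in>X. real (count T (x, y))) = real (count (image_mset fst T) x)"
    and "(\<Sum>x\<in>X. real (count T (x, y))) = real (count (image_mset snd T) y)" for x y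
    using sum_count_Pair_eq_count_image_fst sum_count_Pair_eq_count_image_snd assms(1)
    by (simp_all flip: of_nat_sum)
  then show ?thesis
    using assms(2) unfolding transport_plan_def mset_measure_def by (auto simp: not_in_iff)
qed

lemma d_OT_le_plan_cost:
  assumes "transport_plan X mu nu tau"
  shows "d_OT X mu nu \<le> (\<Sum>z\<in>X \<times> X. tau z * eucl (fst z) (snd z))"
  unfolding d_OT_def
proof (rule cInf_lower)
  show "bdd_below {(\<Sum>z\<in>X \<times> X. tau z * eucl (fst z) (snd z)) | tau. transport_plan X mu nu tau}"
    unfolding transport_plan_def
    by (rule bdd_belowI[where m = 0]) (auto intro!: sum_nonneg mult_nonneg_nonneg eucl_nonneg)
qed (use assms in blast)

lemma d_OT_le_sum_mset:
  assumes "finite X" "set_mset T \<subseteq> X \<times> X"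
  shows "d_OT X (mset_measure (image_mset fst T)) (mset_measure (image_mset snd T))
           \<le> (\<Sum>z\<in>#T. eucl (fst z) (snd z))"
  using d_OT_le_plan_cost[OF transport_plan_count[OF assms]]
    sum_count_mult_eq_sum_mset[OF finite_SigmaI[OF assms(1) assms(1)] assms(2),
      of "\<lambda>z. eucl (fst z) (snd z)"]
  by simp

definition aug_plan :: "(pt \<times> pt) multiset \<Rightarrow> pt multiset \<Rightarrow> pt multiset \<Rightarrow> (pt \<times> pt) multiset" where
  "aug_plan M DA DB =
     M + image_mset (\<lambda>z. (diag_proj (snd z), diag_proj (fst z))) M
       + image_mset (\<lambda>a. (a, diag_proj a)) DA + image_mset (\<lambda>b. (diag_proj b, b)) DB"

lemma aug_plan_marginals:
  assumes "aug_matching P Q M DA DB"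
  shows "image_mset fst (aug_plan M DA DB) = P + image_mset diag_proj Q"
    and "image_mset snd (aug_plan M DA DB) = Q + image_mset diag_proj P"
  using assms unfolding aug_matching_def aug_plan_def
  by (auto simp: image_mset.compositionality comp_def add_ac)

lemma sum_mset_aug_plan_le:
  "(\<Sum>z\<in>#aug_plan M DA DB. eucl (fst z) (snd z)) \<le> 2 * aug_cost M DA DB"
proof -
  have "(\<Sum>z\<in>#M. eucl (diag_proj (snd z)) (diag_proj (fst z))) \<le> (\<Sum>z\<in>#M. eucl (fst z) (snd z))"
    by (intro sum_mset_mono) (metis eucl_diag_proj_le eucl_commute)
  moreover have "(\<Sum>a\<in>#DA. eucl a (diag_proj a)) \<ge> 0" "(\<Sum>b\<in>#DB. eucl (diag_proj b) b) \<ge> 0"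
    by (induction DA; simp add: eucl_nonneg) (induction DB; simp add: eucl_nonneg)
  ultimately show ?thesis
    unfolding aug_plan_def aug_cost_def by (simp add: image_mset.compositionality comp_def)
qed

theorem mainTheorem1:
  fixes P Q :: "pt multiset"
  defines "Ph \<equiv> P + image_mset diag_proj Q"
      and "Qh \<equiv> Q + image_mset diag_proj P"
  shows "d_OT (set_mset Ph \<union> set_mset Qh) (mset_measure Ph) (mset_measure Qh) \<le> 2 * d_W P Q"
proof -
  define X where "X = set_mset Ph \<union> set_mset Qh"
  have "d_OT X (mset_measure Ph) (mset_measure Qh) / 2 \<le> aug_cost M DA DB"
    if "aug_matching P Q M DA DB" for M DA DB
  proof -
    note marginals = aug_plan_marginals[OF that, folded Ph_def Qh_def]
    then have "set_mset (aug_plan M DA DB) \<subseteq> X \<times> X"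
      unfolding X_def by (force dest: multi_member_split)
    from d_OT_le_sum_mset[OF _ this] marginals sum_mset_aug_plan_le[of M DA DB]
    show ?thesis unfolding X_def by simp
  qed
  moreover have "aug_matching P Q {#} P Q"
    unfolding aug_matching_def by simp
  ultimately have "d_OT X (mset_measure Ph) (mset_measure Qh) / 2 \<le> d_W P Q"
    unfolding d_W_def by (intro cInf_greatest) blast+
  then show ?thesis unfolding X_def by simp
qed

end
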